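(* Let $T$ be a real-valued random variable with law $\mathrm{P}_0$, and let $T^*$ denote an independent copy of $T$ (also with law $\mathrm{P}_0$). Define the mid-p-value $$Q = \tfrac{1}{2}\,\mathrm{P}_0(T^* \geq T \mid T)+\tfrac{1}{2}\,\mathrm{P}_0(T^* > T \mid T),$$ i.e. $Q = \tfrac12 G(T) + \tfrac12 G^{>}(T)$ where $G(s)=\mathrm{P}_0(T^*\ge s)$ and $G^{>}(s)=\mathrm{P}_0(T^*>s)$. Let $U$ be uniformly distributed on $[0,1]$. Then, when $T\sim\mathrm{P}_0$, $Q$ is dominated by $U$ in the convex order: for every convex function $h:\mathbb{R}\to\mathbb{R}$, $$\mathrm{E}_0\{h(Q)\} \leq \mathrm{E}\{h(U)\},$$ whenever the expectations exist.
   Context: $T$ may be discrete, continuous or mixed. $\mathrm{E}_0$ denotes expectation when $T\sim\mathrm{P}_0$, and $\mathrm{E}$ denotes expectation with respect to the law of $U$. *)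

theory Defs
  imports "HOL-Probability.Probability"
begin

definition upper_tail :: "real measure \<Rightarrow> real \<Rightarrow> real" where
  "upper_tail P0 s = measure P0 {t. s \<le> t}"

definition strict_upper_tail :: "real measure \<Rightarrow> real \<Rightarrow> real" where
  "strict_upper_tail P0 s = measure P0 {t. s < t}"

definition mid_p :: "real measure \<Rightarrow> real \<Rightarrow> real" where
  "mid_p P0 t = upper_tail P0 t / 2 + strict_upper_tail P0 t / 2"

end

theory Submission
  imports Defs
begin

text \<open>Let \<open>V\<close> be uniform on [0,1] and independent of \<open>T\<close>, and consider the
  randomized p-value \<open>W = G\<^sup>>(T) + V (G(T) - G\<^sup>>(T))\<close>, which spreads the
  mass \<open>P(T\<^sup>* = T)\<close> uniformly over \<open>[G\<^sup>>(T), G(T)]\<close>. \<open>W\<close> is exactly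
  uniform: for \<open>0 < x < 1\<close>, with \<open>s\<close> the point where the upper tail crosses
  level \<open>x\<close>, the event \<open>W \<le> x\<close> consists of \<open>T > s\<close> together with the fraction
  \<open>(x - G\<^sup>>(s)) / P(T = s)\<close> of the atom at \<open>s\<close>, of total probability \<open>x\<close>.
  Since \<open>E V = 1/2\<close>, the mid-p-value is the conditional mean \<open>E(W | T)\<close>, so
  Jensen's inequality applied conditionally on \<open>T\<close> gives
  \<open>E h(Q) \<le> E h(W) = E h(U)\<close>.\<close>

abbreviation uniform01 :: "real measure" where
  "uniform01 \<equiv> uniform_measure lborel {0..1}"

interpretation uniform01: real_distribution uniform01
  by (simp add: real_distribution_def real_distribution_axioms_def prob_space_uniform_measure)

lemma measure_uniform01:
  "B \<in> sets borel \<Longrightarrow> measure uniform01 B = measure lborel ({0..1} \<inter> B)"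
  by (subst measure_uniform_measure) auto

lemma measure_uniform01_atMost:
  fixes c :: real
  assumes "0 \<le> c" "c \<le> 1"
  shows "measure uniform01 {..c} = c"
proof -
  have "{0..1} \<inter> {..c} = {0..c}" using assms by auto
  then show ?thesis using assms by (simp add: measure_uniform01)
qed

lemma integral_uniform01_id: "(\<integral>v. v \<partial>uniform01) = 1 / 2"
proof -
  have "\<P>(v in uniform01. v \<le> c) = (c - 0) / (1 - 0)" if "0 \<le> c" "c \<le> 1" for c :: real
    using measure_uniform01_atMost[OF that] by (simp del: measure_uniform_measure add: atMost_def)
  from uniform01.uniform_distrI_borel_atLeastAtMost[OF _ zero_less_one this]
  have "uniform01.expectation (\<lambda>v. v) = (0 + 1) / 2"
    by (rule uniform01.uniform_distributed_expectation) simp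
  then show ?thesis by simp
qed

lemma measure_uniform01_affine_le:
  fixes a b x :: real
  assumes "a \<le> b"
  shows "b \<le> x \<Longrightarrow> measure uniform01 {v. a + v * (b - a) \<le> x} = 1"
    and "x < a \<Longrightarrow> measure uniform01 {v. a + v * (b - a) \<le> x} = 0"
    and "a \<le> x \<Longrightarrow> x \<le> b \<Longrightarrow> (b - a) * measure uniform01 {v. a + v * (b - a) \<le> x} = x - a"
proof -
  let ?S = "{v. a + v * (b - a) \<le> x}"
  have meas: "measure uniform01 ?S = measure lborel ({0..1} \<inter> ?S)"
    by (rule measure_uniform01) measurable
  have segment: "a \<le> a + v * (b - a) \<and> a + v * (b - a) \<le> b" if "v \<in> {0..1}" for v
    using that assms mult_right_mono[of v 1 "b - a"] by auto
  show "b \<le> x \<Longrightarrow> measure uniform01 ?S = 1"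
  proof -
    assume "b \<le> x"
    then have "{0..1} \<inter> ?S = {0..1}" using segment by force
    then show ?thesis using meas by simp
  qed
  show "x < a \<Longrightarrow> measure uniform01 ?S = 0"
  proof -
    assume "x < a"
    then have "{0..1} \<inter> ?S = {}" using segment by force
    then show ?thesis using meas by simp
  qed
  show "(b - a) * measure uniform01 ?S = x - a" if "a \<le> x" "x \<le> b"
  proof (cases "a = b")
    case False
    then have "?S = {..(x - a) / (b - a)}"
      using assms by (auto simp: pos_le_divide_eq mult.commute)
    moreover have "0 \<le> (x - a) / (b - a)" "(x - a) / (b - a) \<le> 1"
      using that False assms by auto
    ultimately show ?thesis using False by (simp add: measure_uniform01_atMost)
  qed (use that in simp)
qed

definition randomized_p_value :: "real measure \<Rightarrow> real \<Rightarrow> real \<Rightarrow> real" where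
  "randomized_p_value P0 t v =
    strict_upper_tail P0 t + v * (upper_tail P0 t - strict_upper_tail P0 t)"

context real_distribution
begin

lemma strict_upper_tail_eq_cdf: "strict_upper_tail M t = 1 - cdf M t"
proof -
  have "{x. t < x} = space M - {..t}" by auto
  then show ?thesis unfolding strict_upper_tail_def cdf_def using prob_compl[of "{..t}"] by simp
qed

lemma upper_tail_eq: "upper_tail M t = 1 - measure M {..<t}"
proof -
  have "{x. t \<le> x} = space M - {..<t}" by auto
  then show ?thesis unfolding upper_tail_def using prob_compl[of "{..<t}"] by simp
qed

lemma strict_upper_tail_le_upper_tail: "strict_upper_tail M t \<le> upper_tail M t"
  unfolding strict_upper_tail_def upper_tail_def by (intro finite_measure_mono) auto

lemma upper_tail_le_strict_upper_tail: "t < r \<Longrightarrow> upper_tail M r \<le> strict_upper_tail M t"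
  unfolding strict_upper_tail_def upper_tail_def by (intro finite_measure_mono) auto

lemma upper_tail_antimono: "t \<le> r \<Longrightarrow> upper_tail M r \<le> upper_tail M t"
  unfolding upper_tail_def by (intro finite_measure_mono) auto

lemma upper_tail_minus_strict_upper_tail:
  "upper_tail M t - strict_upper_tail M t = measure M {t}"
proof -
  have "{x. t \<le> x} = {t} \<union> {x. t < x}" by auto
  then have "upper_tail M t = measure M {t} + strict_upper_tail M t"
    unfolding upper_tail_def strict_upper_tail_def
    using finite_measure_Union[of "{t}" "{x. t < x}"] by simp
  then show ?thesis by simp
qed

lemma continuous_at_right_strict_upper_tail: "continuous (at_right t) (strict_upper_tail M)"
  unfolding strict_upper_tail_eq_cdf[abs_def]
  by (intro continuous_intros cdf_is_right_cont)

lemma strict_upper_tail_at_left: "(strict_upper_tail M \<longlongrightarrow> upper_tail M t) (at_left t)"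
  unfolding strict_upper_tail_eq_cdf[abs_def] upper_tail_eq
  by (intro tendsto_intros cdf_at_left)

lemma strict_upper_tail_at_top: "(strict_upper_tail M \<longlongrightarrow> 0) at_top"
  unfolding strict_upper_tail_eq_cdf[abs_def]
  using tendsto_diff[OF tendsto_const[of 1] cdf_lim_at_top_prob] by simp

lemma strict_upper_tail_at_bot: "(strict_upper_tail M \<longlongrightarrow> 1) at_bot"
  unfolding strict_upper_tail_eq_cdf[abs_def]
  using tendsto_diff[OF tendsto_const[of 1] cdf_lim_at_bot] by simp

lemma borel_measurable_upper_tail [measurable]: "upper_tail M \<in> borel_measurable borel"
proof -
  have "mono (\<lambda>t. - upper_tail M t)" by (auto simp: mono_def intro: upper_tail_antimono)
  then have "(\<lambda>t. - (- upper_tail M t)) \<in> borel_measurable borel"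
    by (intro borel_measurable_uminus borel_measurable_mono)
  then show ?thesis by simp
qed

lemma borel_measurable_strict_upper_tail [measurable]:
  "strict_upper_tail M \<in> borel_measurable borel"
  unfolding strict_upper_tail_eq_cdf[abs_def]
  by (intro borel_measurable_diff borel_measurable_const borel_measurable_mono)
    (auto simp: mono_def cdf_nondecreasing)

lemma upper_tail_threshold:
  fixes x :: real
  assumes "0 < x" "x < 1"
  obtains s where "\<And>t. s < t \<Longrightarrow> upper_tail M t \<le> x"
    and "\<And>t. t < s \<Longrightarrow> x < strict_upper_tail M t"
    and "strict_upper_tail M s \<le> x" and "x \<le> upper_tail M s"
proof -
  define A where "A = {t. upper_tail M t \<le> x}"
  obtain t0 where "strict_upper_tail M t0 < x"
    using order_tendstoD(2)[OF strict_upper_tail_at_top \<open>0 < x\<close>]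
    by (auto simp: eventually_at_top_linorder)
  then have "t0 + 1 \<in> A"
    unfolding A_def using upper_tail_le_strict_upper_tail[of t0 "t0 + 1"] by simp
  then have A_nonempty: "A \<noteq> {}" by blast
  obtain t1 where "x < strict_upper_tail M t1"
    using order_tendstoD(1)[OF strict_upper_tail_at_bot \<open>x < 1\<close>]
    by (auto simp: eventually_at_bot_linorder)
  then have "t1 \<le> r" if "r \<in> A" for r
    using that strict_upper_tail_le_upper_tail[of t1] upper_tail_antimono[of r t1]
    unfolding A_def by (cases "t1 \<le> r") auto
  then have A_bdd: "bdd_below A" by (auto simp: bdd_below_def)
  define s where "s = Inf A"
  have above: "upper_tail M t \<le> x" if "s < t" for t
  proof -
    obtain a where "a \<in> A" "a < t"
      using \<open>s < t\<close> unfolding s_def cInf_less_iff[OF A_nonempty A_bdd] by blast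
    then show ?thesis using upper_tail_antimono[of a t] unfolding A_def by simp
  qed
  have below: "x < upper_tail M t" if "t < s" for t
    using that cInf_lower[OF _ A_bdd, of t] unfolding s_def A_def by force
  have strictly_below: "x < strict_upper_tail M t" if "t < s" for t
    using below[of "(t + s) / 2"] upper_tail_le_strict_upper_tail[of t "(t + s) / 2"] that
    by simp
  have "strict_upper_tail M s \<le> x"
  proof (rule tendsto_upperbound)
    show "(strict_upper_tail M \<longlongrightarrow> strict_upper_tail M s) (at_right s)"
      using continuous_at_right_strict_upper_tail by (simp add: continuous_within)
    show "\<forall>\<^sub>F t in at_right s. strict_upper_tail M t \<le> x"
      using eventually_at_right_less
      by eventually_elim (use above strict_upper_tail_le_upper_tail order_trans in blast)
  qed simp
  moreover have "x \<le> upper_tail M s"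
  proof (rule tendsto_lowerbound[OF strict_upper_tail_at_left])
    show "\<forall>\<^sub>F t in at_left s. x \<le> strict_upper_tail M t"
      unfolding eventually_at_filter by (intro always_eventually) (auto intro: less_imp_le strictly_below)
  qed simp
  ultimately show ?thesis using that above strictly_below by blast
qed

lemma integral_prob_randomized_p_value_le:
  fixes x :: real
  assumes "0 < x" "x < 1"
  shows "(\<integral>t. measure uniform01 {v. randomized_p_value M t v \<le> x} \<partial>M) = x"
    (is "(\<integral>t. ?F t \<partial>M) = x")
proof -
  obtain s where above: "\<And>t. s < t \<Longrightarrow> upper_tail M t \<le> x"
    and below: "\<And>t. t < s \<Longrightarrow> x < strict_upper_tail M t"
    and at_s: "strict_upper_tail M s \<le> x" "x \<le> upper_tail M s"
    using upper_tail_threshold[OF assms] by blast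
  note segment = measure_uniform01_affine_le[OF strict_upper_tail_le_upper_tail]
  define c where "c = ?F s"
  have "?F t = indicator {s<..} t + c * indicator {s} t" for t
  proof (cases t s rule: linorder_cases)
    case less
    then show ?thesis using segment(2)[OF below] by (simp add: randomized_p_value_def)
  next
    case greater
    then show ?thesis using segment(1)[OF above] by (simp add: randomized_p_value_def)
  qed (simp add: c_def)
  then have "(\<integral>t. ?F t \<partial>M) = measure M {s<..} + c * measure M {s}"
    by (simp add: emeasure_eq_measure)
  also have "\<dots> = strict_upper_tail M s + (upper_tail M s - strict_upper_tail M s) * c"
    using upper_tail_minus_strict_upper_tail[of s] by (simp add: strict_upper_tail_def greaterThan_def)
  also have "\<dots> = x"
    using segment(3)[OF at_s] unfolding c_def randomized_p_value_def by simp
  finally show ?thesis .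
qed

lemma borel_measurable_randomized_p_value [measurable]:
  "(\<lambda>z. randomized_p_value M (fst z) (snd z)) \<in> borel_measurable (M \<Otimes>\<^sub>M uniform01)"
  unfolding randomized_p_value_def by measurable

lemma prob_randomized_p_value_le:
  fixes x :: real
  assumes "0 \<le> x" "x \<le> 1"
  shows "measure (M \<Otimes>\<^sub>M uniform01)
    {z \<in> space (M \<Otimes>\<^sub>M uniform01). randomized_p_value M (fst z) (snd z) \<le> x} = x"
proof -
  interpret pair_prob_space M uniform01 ..
  define P where "P y = measure (M \<Otimes>\<^sub>M uniform01)
    {z \<in> space (M \<Otimes>\<^sub>M uniform01). randomized_p_value M (fst z) (snd z) \<le> y}" for y
  have event: "{z \<in> space (M \<Otimes>\<^sub>M uniform01). randomized_p_value M (fst z) (snd z) \<le> y}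
      \<in> sets (M \<Otimes>\<^sub>M uniform01)" for y
    by measurable
  have interior: "P y = y" if "0 < y" "y < 1" for y
  proof -
    let ?S = "{z \<in> space (M \<Otimes>\<^sub>M uniform01). randomized_p_value M (fst z) (snd z) \<le> y}"
    have "P y = (\<integral>z. indicator ?S z \<partial>(M \<Otimes>\<^sub>M uniform01))"
      unfolding P_def by (simp add: Int_absorb2)
    also have "\<dots> = (\<integral>t. \<integral>v. indicator ?S (t, v) \<partial>uniform01 \<partial>M)"
      using event by (intro integral_fst'[symmetric] integrable_real_indicator)
        (auto simp: less_top[symmetric] P.emeasure_finite)
    also have "\<dots> = (\<integral>t. measure uniform01 {v. randomized_p_value M t v \<le> y} \<partial>M)"
    proof (rule Bochner_Integration.integral_cong[OF refl])
      fix t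
      have "(\<lambda>v. indicator ?S (t, v) :: real) = indicator {v. randomized_p_value M t v \<le> y}"
        by (auto simp: space_pair_measure indicator_def)
      then show "(\<integral>v. indicator ?S (t, v) \<partial>uniform01) =
          measure uniform01 {v. randomized_p_value M t v \<le> y}"
        by simp
    qed
    also have "\<dots> = y"
      by (rule integral_prob_randomized_p_value_le[OF that])
    finally show ?thesis .
  qed
  have mono: "P a \<le> P b" if "a \<le> b" for a b
    unfolding P_def using that event by (intro P.finite_measure_mono) auto
  consider "x = 0" | "0 < x \<and> x < 1" | "x = 1" using assms by linarith
  then show ?thesis
  proof cases
    case 1
    have "P 0 \<le> 0"
    proof (rule dense_ge_bounded[OF zero_less_one])
      fix w :: real assume "0 < w" "w < 1"
      then show "P 0 \<le> w" using mono[of 0 w] interior[of w] by simp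
    qed
    then show ?thesis using 1 unfolding P_def by (simp add: antisym)
  next
    case 3
    have "1 \<le> P 1"
    proof (rule dense_le_bounded[OF zero_less_one])
      fix w :: real assume "0 < w" "w < 1"
      then show "w \<le> P 1" using mono[of w 1] interior[of w] by simp
    qed
    then show ?thesis using 3 unfolding P_def by (simp add: antisym)
  qed (use interior in \<open>simp add: P_def\<close>)
qed

lemma distr_randomized_p_value:
  "distr (M \<Otimes>\<^sub>M uniform01) lborel (\<lambda>z. randomized_p_value M (fst z) (snd z)) = uniform01"
proof -
  interpret pair_prob_space M uniform01 ..
  have "distributed (M \<Otimes>\<^sub>M uniform01) lborel (\<lambda>z. randomized_p_value M (fst z) (snd z))
      (\<lambda>x. indicator {0..1} x / measure lborel {0..1::real})"
    by (rule P.uniform_distrI_borel_atLeastAtMost) (simp_all add: prob_randomized_p_value_le)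
  then have "distr (M \<Otimes>\<^sub>M uniform01) lborel (\<lambda>z. randomized_p_value M (fst z) (snd z)) =
      density lborel (\<lambda>x. ennreal (indicator {0..1} x))"
    by (simp add: distributed_def)
  also have "\<dots> = uniform01"
    unfolding uniform_measure_def by (intro density_cong) (auto simp: indicator_def)
  finally show ?thesis .
qed

end

lemma convex_on_midpoint_le_integral_uniform01:
  fixes h :: "real \<Rightarrow> real" and a b :: real
  assumes "convex_on UNIV h"
  shows "h ((a + b) / 2) \<le> (\<integral>v. h (a + v * (b - a)) \<partial>uniform01)"
proof -
  let ?X = "\<lambda>v. a + v * (b - a)"
  have h_continuous: "continuous_on UNIV h"
    using convex_on_continuous[OF open_UNIV assms] .
  have "compact (?X ` {0..1})"
    by (intro compact_continuous_image continuous_intros compact_Icc)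
  then have "compact (h ` ?X ` {0..1})"
    by (rule compact_continuous_image[OF continuous_on_subset[OF h_continuous], rotated]) simp
  then have "bounded (h ` ?X ` {0..1})" by (rule compact_imp_bounded)
  then obtain B where "\<forall>y \<in> h ` ?X ` {0..1}. norm y \<le> B"
    unfolding bounded_iff ..
  then have B: "\<And>v. v \<in> {0..1} \<Longrightarrow> norm (h (?X v)) \<le> B" by simp
  have on_unit: "AE v in uniform01. v \<in> {0..1}"
    by (rule AE_uniform_measureI) auto
  have h_borel: "h \<in> borel_measurable borel"
    using borel_measurable_continuous_onI[OF h_continuous] .
  have "integrable uniform01 (\<lambda>v. v)"
  proof (rule uniform01.integrable_const_bound[where B=1])
    show "AE v in uniform01. norm v \<le> 1"
      using on_unit by eventually_elim auto
  qed simp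
  moreover have "integrable uniform01 (\<lambda>v. h (?X v))"
  proof (rule uniform01.integrable_const_bound[where B=B])
    show "AE v in uniform01. norm (h (?X v)) \<le> B"
      using on_unit by eventually_elim (rule B)
  qed (simp add: measurable_compose[OF _ h_borel])
  ultimately have "h (uniform01.expectation ?X) \<le> uniform01.expectation (\<lambda>v. h (?X v))"
    by (intro uniform01.jensens_inequality[where I=UNIV] assms) auto
  moreover have "uniform01.expectation ?X = (a + b) / 2"
    using \<open>integrable uniform01 (\<lambda>v. v)\<close>
    by (simp add: integral_uniform01_id field_simps)
  ultimately show ?thesis by simp
qed

lemma mid_p_le_integral_randomized_p_value:
  fixes h :: "real \<Rightarrow> real"
  assumes "convex_on UNIV h"
  shows "h (mid_p P0 t) \<le> (\<integral>v. h (randomized_p_value P0 t v) \<partial>uniform01)"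
proof -
  have "mid_p P0 t = (strict_upper_tail P0 t + upper_tail P0 t) / 2"
    unfolding mid_p_def by simp
  then show ?thesis
    unfolding randomized_p_value_def by (metis convex_on_midpoint_le_integral_uniform01[OF assms])
qed

theorem mainTheorem1:
  fixes P0 :: "real measure" and h :: "real \<Rightarrow> real"
  assumes "prob_space P0"
    and "sets P0 = sets borel"
    and "convex_on UNIV h"
    and "integrable P0 (\<lambda>t. h (mid_p P0 t))"
    and "integrable (uniform_measure lborel {0..1}) h"
  shows "(\<integral>t. h (mid_p P0 t) \<partial>P0) \<le> (\<integral>u. h u \<partial>uniform_measure lborel {0..1})"
proof -
  interpret real_distribution P0
    using assms(1,2) by (simp add: real_distribution_def real_distribution_axioms_def)
  interpret pair_prob_space P0 uniform01 ..
  let ?W = "\<lambda>z. randomized_p_value P0 (fst z) (snd z)"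
  have h_borel: "h \<in> borel_measurable borel"
    using borel_measurable_continuous_onI[OF convex_on_continuous[OF open_UNIV assms(3)]] .
  have W_integrable: "integrable (P0 \<Otimes>\<^sub>M uniform01) (\<lambda>z. h (?W z))"
    using integrable_distr[of ?W _ lborel h] assms(5) by (simp add: distr_randomized_p_value)
  have "(\<integral>t. h (mid_p P0 t) \<partial>P0) \<le>
      (\<integral>t. \<integral>v. h (randomized_p_value P0 t v) \<partial>uniform01 \<partial>P0)"
  proof (rule integral_mono[OF assms(4) _ mid_p_le_integral_randomized_p_value[OF assms(3)]])
    show "integrable P0 (\<lambda>t. \<integral>v. h (randomized_p_value P0 t v) \<partial>uniform01)"
      using integrable_fst'[OF W_integrable] by simp
  qed
  also have "\<dots> = (\<integral>z. h (?W z) \<partial>(P0 \<Otimes>\<^sub>M uniform01))"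
    using integral_fst'[OF W_integrable] by simp
  also have "\<dots> = (\<integral>u. h u \<partial>uniform01)"
    using integral_distr[of ?W "P0 \<Otimes>\<^sub>M uniform01" lborel h] h_borel
    by (simp add: distr_randomized_p_value)
  finally show ?thesis .
qed

end
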